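(* Let $\{W_n\}_{n\ge0}$ be an Appell monic polynomial sequence with cubic decomposition $W_{3n}(x)=P_n(x^3)+xa^1_{n-1}(x^3)+x^2a^2_{n-1}(x^3)$, $W_{3n+1}(x)=b^1_n(x^3)+xQ_n(x^3)+x^2b^2_{n-1}(x^3)$, $W_{3n+2}(x)=c^1_n(x^3)+xc^2_n(x^3)+x^2R_n(x^3)$ (components as in the context). Let $\mathcal{O}_{0,1,2}=D(I+3xD)(2I+3xD)$, $\mathcal{O}_{2,0,1}=(2I+3xD)D(I+3xD)$, $\mathcal{O}_{1,2,0}=(I+3xD)(2I+3xD)D$. Then for $n\ge1$: $a^2_{n-1}=((n+1)(3n+1)(3n+2))^{-1}\mathcal{O}_{0,1,2}a^2_n$, $b^2_{n-1}=((n+1)(3n+2)(3n+4))^{-1}\mathcal{O}_{0,1,2}b^2_n$, $R_n=((n+1)(3n+4)(3n+5))^{-1}\mathcal{O}_{0,1,2}R_{n+1}$, $a^1_{n-1}=((n+1)(3n+1)(3n+2))^{-1}\mathcal{O}_{2,0,1}a^1_n$, $Q_n=((n+1)(3n+2)(3n+4))^{-1}\mathcal{O}_{2,0,1}Q_{n+1}$, $c^2_{n-1}=(n(3n+1)(3n+2))^{-1}\mathcal{O}_{2,0,1}c^2_n$, $P_n=((n+1)(3n+1)(3n+2))^{-1}\mathcal{O}_{1,2,0}P_{n+1}$, $b^1_{n-1}=(n(3n-1)(3n+1))^{-1}\mathcal{O}_{1,2,0}b^1_n$, $c^1_{n-1}=(n(3n+1)(3n+2))^{-1}\mathcal{O}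_{1,2,0}c^1_n$.
   Context: $\mathcal{P}$ is the space of complex polynomials; $I$ is the identity, $D$ the derivative, $x$ multiplication by $x$, products of operators are compositions. An MPS is a sequence $\{W_n\}_{n\ge0}$ with $W_n$ monic of degree $n$; it is Appell if $DW_{n+1}=(n+1)W_n$ for $n\ge0$. Cubic decomposition: for any MPS there are unique polynomials with the displayed identities for all $n\ge0$, where $\{P_n\},\{Q_n\},\{R_n\}$ are MPSs and $\deg a^1_{n-1},\deg a^2_{n-1},\deg b^2_{n-1}\le n-1$, $\deg b^1_n,\deg c^1_n,\deg c^2_n\le n$, with $a^1_{-1}=a^2_{-1}=b^2_{-1}=0$. *)

theory Defs
  imports "HOL-Computational_Algebra.Polynomial"
begin

definition MPS :: "(nat \<Rightarrow> complex poly) \<Rightarrow> bool" where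
  "MPS W \<longleftrightarrow> (\<forall>n. degree (W n) = n \<and> lead_coeff (W n) = 1)"

definition Appell :: "(nat \<Rightarrow> complex poly) \<Rightarrow> bool" where
  "Appell W \<longleftrightarrow> MPS W \<and> (\<forall>n. pderiv (W (Suc n)) = smult (of_nat (Suc n)) (W n))"

definition cub :: "complex poly \<Rightarrow> complex poly" where
  "cub p = pcompose p (monom 1 3)"

definition theta :: "complex poly \<Rightarrow> complex poly" where
  "theta p = smult 3 (monom 1 1 * pderiv p)"

definition opA :: "complex poly \<Rightarrow> complex poly" where
  "opA p = p + theta p"
definition opB :: "complex poly \<Rightarrow> complex poly" where
  "opB p = smult 2 p + theta p"

definition O012 :: "complex poly \<Rightarrow> complex poly" where
  "O012 p = pderiv (opA (opB p))"
definition O201 :: "complex poly \<Rightarrow> complex poly" where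
  "O201 p = opB (pderiv (opA p))"
definition O120 :: "complex poly \<Rightarrow> complex poly" where
  "O120 p = opA (opB (pderiv p))"

text \<open>Cubic decomposition; a1 m, a2 m, b2 m stand for a^1_m etc. (m \<ge> 0); the
  index -1 components are zero, which is encoded by the separate n = 0 equations.\<close>
definition cubic_decomp ::
  "(nat \<Rightarrow> complex poly) \<Rightarrow> (nat \<Rightarrow> complex poly) \<Rightarrow> (nat \<Rightarrow> complex poly) \<Rightarrow> (nat \<Rightarrow> complex poly)
   \<Rightarrow> (nat \<Rightarrow> complex poly) \<Rightarrow> (nat \<Rightarrow> complex poly) \<Rightarrow> (nat \<Rightarrow> complex poly)
   \<Rightarrow> (nat \<Rightarrow> complex poly) \<Rightarrow> (nat \<Rightarrow> complex poly) \<Rightarrow> (nat \<Rightarrow> complex poly) \<Rightarrow> bool" where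
  "cubic_decomp W P Q R a1 a2 b1 b2 c1 c2 \<longleftrightarrow>
     MPS P \<and> MPS Q \<and> MPS R \<and>
     (\<forall>n. degree (a1 n) \<le> n \<and> degree (a2 n) \<le> n \<and> degree (b2 n) \<le> n \<and>
          degree (b1 n) \<le> n \<and> degree (c1 n) \<le> n \<and> degree (c2 n) \<le> n) \<and>
     W 0 = cub (P 0) \<and>
     W 1 = cub (b1 0) + monom 1 1 * cub (Q 0) \<and>
     (\<forall>n\<ge>1. W (3*n) = cub (P n) + monom 1 1 * cub (a1 (n-1)) + monom 1 2 * cub (a2 (n-1))) \<and>
     (\<forall>n\<ge>1. W (3*n+1) = cub (b1 n) + monom 1 1 * cub (Q n) + monom 1 2 * cub (b2 (n-1))) \<and>
     (\<forall>n. W (3*n+2) = cub (c1 n) + monom 1 1 * cub (c2 n) + monom 1 2 * cub (R n))"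

end

theory Submission
  imports Defs
begin

text \<open>Every polynomial splits uniquely as \<open>p\<^sub>0(x\<^sup>3) + x p\<^sub>1(x\<^sup>3) + x\<^sup>2 p\<^sub>2(x\<^sup>3)\<close>,
  and \<open>D\<close> maps the triple \<open>(p\<^sub>0, p\<^sub>1, p\<^sub>2)\<close> to \<open>((I + 3xD) p\<^sub>1, (2I + 3xD) p\<^sub>2, 3 D p\<^sub>0)\<close>.
  Hence \<open>D\<^sup>3\<close> acts on the three components by \<open>3 O120\<close>, \<open>3 O201\<close>, \<open>3 O012\<close>.
  For an Appell sequence \<open>D\<^sup>3 W\<^sub>k\<^sub>+\<^sub>3 = (k+1)(k+2)(k+3) W\<^sub>k\<close>, so comparing components
  for \<open>k = 3n, 3n+1, 3n+2, 3n-2, 3n-1\<close> gives all nine identities.\<close>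

lemma coeff_pcompose_monom:
  fixes p :: "'a::comm_ring_1 poly"
  assumes "0 < m"
  shows "coeff (p \<circ>\<^sub>p monom 1 m) k = (if m dvd k then coeff p (k div m) else 0)"
proof (induction p arbitrary: k)
  case (pCons a p)
  have "coeff (pCons a p \<circ>\<^sub>p monom 1 m) k
      = (if k = 0 then a else 0) + (if k < m then 0 else coeff (p \<circ>\<^sub>p monom 1 m) (k - m))"
    by (simp add: pcompose_pCons coeff_monom_mult monom_0 coeff_pCons split: nat.split)
  also have "\<dots> = (if m dvd k then coeff (pCons a p) (k div m) else 0)"
    using assms by (auto simp: pCons.IH coeff_pCons le_div_geq dvd_minus_self split: nat.split)
  finally show ?case .
qed simp

lemma cub_add: "cub (p + q) = cub p + cub q"
  by (simp add: cub_def pcompose_add)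

lemma cub_smult: "cub (smult c p) = smult c (cub p)"
  by (simp add: cub_def pcompose_smult)

lemma cub_mult: "cub (p * q) = cub p * cub q"
  by (simp add: cub_def pcompose_mult)

lemma cub_monom: "cub (monom c k) = monom c (3 * k)"
  by (rule poly_eqI) (auto simp: cub_def coeff_pcompose_monom coeff_monom; presburger)

lemma pderiv_cub: "pderiv (cub p) = monom 1 2 * cub (smult 3 (pderiv p))"
  by (simp add: cub_def pderiv_pcompose pderiv_monom pcompose_smult mult_ac smult_monom)
    (simp add: monom_altdef)

definition cubic_comb ::
  "complex poly \<Rightarrow> complex poly \<Rightarrow> complex poly \<Rightarrow> complex poly" where
  "cubic_comb p0 p1 p2 = cub p0 + monom 1 1 * cub p1 + monom 1 2 * cub p2"

lemma coeff_cubic_comb: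
  "coeff (cubic_comb p0 p1 p2) (3 * k) = coeff p0 k"
  "coeff (cubic_comb p0 p1 p2) (3 * k + 1) = coeff p1 k"
  "coeff (cubic_comb p0 p1 p2) (3 * k + 2) = coeff p2 k"
  by (auto simp: cubic_comb_def cub_def coeff_monom_mult coeff_pcompose_monom; presburger)+

lemma cubic_comb_inject:
  assumes "cubic_comb p0 p1 p2 = cubic_comb q0 q1 q2"
  shows "p0 = q0" "p1 = q1" "p2 = q2"
  using assms by (metis coeff_cubic_comb poly_eqI)+

lemma pderiv_x_mult_cub: "pderiv (monom 1 1 * cub p) = cub (opA p)"
proof -
  have "pderiv (monom 1 1 * cub p) = cub p + monom 1 3 * cub (smult 3 (pderiv p))"
    by (simp add: pderiv_mult pderiv_monom pderiv_cub mult.assoc[symmetric] mult_monom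
        numeral_3_eq_3)
  then show ?thesis
    by (simp add: opA_def theta_def cub_add cub_smult cub_mult cub_monom)
qed

lemma pderiv_x2_mult_cub: "pderiv (monom 1 2 * cub p) = monom 1 1 * cub (opB p)"
proof -
  have "pderiv (monom 1 2 * cub p)
      = monom 1 1 * (smult 2 (cub p) + monom 1 3 * cub (smult 3 (pderiv p)))"
    by (simp add: pderiv_mult pderiv_monom pderiv_cub mult.assoc[symmetric] mult_monom
        distrib_left smult_monom_mult)
  then show ?thesis
    by (simp add: opB_def theta_def cub_add cub_smult cub_mult cub_monom)
qed

lemma pderiv_cubic_comb:
  "pderiv (cubic_comb p0 p1 p2) = cubic_comb (opA p1) (opB p2) (smult 3 (pderiv p0))"
  by (simp only: cubic_comb_def pderiv_add pderiv_x_mult_cub pderiv_x2_mult_cub pderiv_cub add_ac)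

lemma opA_smult: "opA (smult c p) = smult c (opA p)"
  by (simp add: opA_def theta_def pderiv_smult smult_add_right mult_smult_right
      smult_smult mult.commute)

lemma opB_smult: "opB (smult c p) = smult c (opB p)"
  by (simp add: opB_def theta_def pderiv_smult smult_add_right mult_smult_right
      smult_smult mult.commute)

lemma smult_cubic_comb:
  "smult c (cubic_comb p0 p1 p2) = cubic_comb (smult c p0) (smult c p1) (smult c p2)"
  by (simp add: cubic_comb_def cub_smult smult_add_right)

lemma pderiv3_cubic_comb:
  "(pderiv ^^ 3) (cubic_comb p0 p1 p2)
     = cubic_comb (smult 3 (O120 p0)) (smult 3 (O201 p1)) (smult 3 (O012 p2))"
  by (simp add: numeral_3_eq_3 pderiv_cubic_comb O120_def O201_def O012_def opA_smult opB_smult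
      pderiv_smult)

lemma Appell_funpow_pderiv:
  assumes "Appell W"
  shows "(pderiv ^^ j) (W (k + j)) = smult (pochhammer (of_nat k + 1) j) (W k)"
proof (induction j arbitrary: k)
  case (Suc j)
  have "(pderiv ^^ Suc j) (W (k + Suc j))
      = pderiv (smult (pochhammer (of_nat (Suc k) + 1) j) (W (Suc k)))"
    using Suc.IH[of "Suc k"] by (simp add: add.commute)
  also have "\<dots> = smult (pochhammer (of_nat k + 1) (Suc j)) (W k)"
    using assms by (simp add: Appell_def pderiv_smult pochhammer_rec add_ac mult.commute)
  finally show ?case .
qed simp

lemma Appell_cubic_comb_descent:
  assumes "Appell W"
    and "W (k + 3) = cubic_comb p0 p1 p2" and "W k = cubic_comb q0 q1 q2"
    and "(k + 1) * (k + 2) * (k + 3) = 3 * d"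
  shows "q0 = smult (inverse (of_nat d)) (O120 p0)"
    and "q1 = smult (inverse (of_nat d)) (O201 p1)"
    and "q2 = smult (inverse (of_nat d)) (O012 p2)"
proof -
  have "pochhammer (of_nat k + 1) 3 = (of_nat (3 * d) :: complex)"
    unfolding assms(4)[symmetric] by (simp add: pochhammer_Suc_prod numeral_3_eq_3 algebra_simps)
  then have "cubic_comb (smult 3 (O120 p0)) (smult 3 (O201 p1)) (smult 3 (O012 p2))
      = smult (3 * of_nat d) (cubic_comb q0 q1 q2)"
    using Appell_funpow_pderiv[OF assms(1), of 3 k] by (simp add: assms(2,3) pderiv3_cubic_comb)
  then have "cubic_comb (smult 3 (O120 p0)) (smult 3 (O201 p1)) (smult 3 (O012 p2))
      = cubic_comb (smult (3 * of_nat d) q0) (smult (3 * of_nat d) q1) (smult (3 * of_nat d) q2)"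
    by (simp only: smult_cubic_comb)
  note components = cubic_comb_inject[OF this]
  have "d \<noteq> 0"
    using assms(4) by auto
  then have cancel: "q = smult (inverse (of_nat d)) X"
    if "smult 3 X = smult (3 * of_nat d) q" for X q :: "complex poly"
    using arg_cong[OF that, of "smult (inverse (3 * of_nat d))"] by (simp add: smult_smult)
  show "q0 = smult (inverse (of_nat d)) (O120 p0)"
    and "q1 = smult (inverse (of_nat d)) (O201 p1)"
    and "q2 = smult (inverse (of_nat d)) (O012 p2)"
    using components by (simp_all add: cancel)
qed

context
  fixes W P Q R a1 a2 b1 b2 c1 c2 :: "nat \<Rightarrow> complex poly"
  assumes decomp: "cubic_decomp W P Q R a1 a2 b1 b2 c1 c2"
begin

lemma cubic_decomp_3n:
  "n \<ge> 1 \<Longrightarrow> W (3 * n) = cubic_comb (P n) (a1 (n - 1)) (a2 (n - 1))"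
  using decomp by (simp add: cubic_decomp_def cubic_comb_def)

lemma cubic_decomp_3n1:
  "W (3 * n + 1) = cubic_comb (b1 n) (Q n) (if n = 0 then 0 else b2 (n - 1))"
  using decomp by (cases "n = 0") (simp_all add: cubic_decomp_def cubic_comb_def cub_def)

lemma cubic_decomp_3n2: "W (3 * n + 2) = cubic_comb (c1 n) (c2 n) (R n)"
  using decomp by (simp add: cubic_decomp_def cubic_comb_def)

end

theorem proposition7:
  fixes W P Q R a1 a2 b1 b2 c1 c2 :: "nat \<Rightarrow> complex poly" and n :: nat
  assumes "Appell W"
    and "cubic_decomp W P Q R a1 a2 b1 b2 c1 c2"
    and "n \<ge> 1"
  shows "(a2 (n-1) = smult (inverse (of_nat ((n+1)*(3*n+1)*(3*n+2)))) (O012 (a2 n))) \<and>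
    (b2 (n-1) = smult (inverse (of_nat ((n+1)*(3*n+2)*(3*n+4)))) (O012 (b2 n))) \<and>
    (R n = smult (inverse (of_nat ((n+1)*(3*n+4)*(3*n+5)))) (O012 (R (n+1)))) \<and>
    (a1 (n-1) = smult (inverse (of_nat ((n+1)*(3*n+1)*(3*n+2)))) (O201 (a1 n))) \<and>
    (Q n = smult (inverse (of_nat ((n+1)*(3*n+2)*(3*n+4)))) (O201 (Q (n+1)))) \<and>
    (c2 (n-1) = smult (inverse (of_nat (n*(3*n+1)*(3*n+2)))) (O201 (c2 n))) \<and>
    (P n = smult (inverse (of_nat ((n+1)*(3*n+1)*(3*n+2)))) (O120 (P (n+1)))) \<and>
    (b1 (n-1) = smult (inverse (of_nat (n*(3*n-1)*(3*n+1)))) (O120 (b1 n))) \<and>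
    (c1 (n-1) = smult (inverse (of_nat (n*(3*n+1)*(3*n+2)))) (O120 (c1 n)))"
proof -
  note descent = Appell_cubic_comb_descent[OF assms(1)]
  note W0 = cubic_decomp_3n[OF assms(2)]
    and W1 = cubic_decomp_3n1[OF assms(2)]
    and W2 = cubic_decomp_3n2[OF assms(2)]
  have W_3n1: "W (3 * n + 1) = cubic_comb (b1 n) (Q n) (b2 (n - 1))"
    and shift_3n: "W (3 * n + 3) = cubic_comb (P (n + 1)) (a1 n) (a2 n)"
    and shift_3n1: "W (3 * n + 1 + 3) = cubic_comb (b1 (n + 1)) (Q (n + 1)) (b2 n)"
    and shift_3n2: "W (3 * n + 2 + 3) = cubic_comb (c1 (n + 1)) (c2 (n + 1)) (R (n + 1))"
    and shift_3n_minus2: "W (3 * (n - 1) + 1 + 3) = cubic_comb (b1 n) (Q n) (b2 (n - 1))"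
    and shift_3n_minus1: "W (3 * (n - 1) + 2 + 3) = cubic_comb (c1 n) (c2 n) (R n)"
    using assms(3) W0[of "n + 1"] W1[of n] W1[of "n + 1"] W2[of n] W2[of "n + 1"]
    by (simp_all add: algebra_simps)
  have counts:
    "(3 * n + 1) * (3 * n + 2) * (3 * n + 3) = 3 * ((n + 1) * (3 * n + 1) * (3 * n + 2))"
    "(3 * n + 1 + 1) * (3 * n + 1 + 2) * (3 * n + 1 + 3)
      = 3 * ((n + 1) * (3 * n + 2) * (3 * n + 4))"
    "(3 * n + 2 + 1) * (3 * n + 2 + 2) * (3 * n + 2 + 3)
      = 3 * ((n + 1) * (3 * n + 4) * (3 * n + 5))"
    "(3 * (n - 1) + 1 + 1) * (3 * (n - 1) + 1 + 2) * (3 * (n - 1) + 1 + 3)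
      = 3 * (n * (3 * n - 1) * (3 * n + 1))"
    "(3 * (n - 1) + 2 + 1) * (3 * (n - 1) + 2 + 2) * (3 * (n - 1) + 2 + 3)
      = 3 * (n * (3 * n + 1) * (3 * n + 2))"
    using assms(3) by (cases n; simp add: algebra_simps)+
  show ?thesis
    using descent[OF shift_3n W0[OF assms(3)] counts(1)]
      descent[OF shift_3n1 W_3n1 counts(2)]
      descent[OF shift_3n2 W2[of n] counts(3)]
      descent[OF shift_3n_minus2 W1[of "n - 1"] counts(4)]
      descent[OF shift_3n_minus1 W2[of "n - 1"] counts(5)]
    by blast
qed

end
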